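(* Let $(\mathcal{M},\mathfrak{g})$ be a $C^{3}$-smooth $n$-dimensional Riemannian manifold with $C^{3}$ metric. Let $v\in C^{2}(\mathcal{M})$ be real-valued, $\ell\in C^{3}(\mathcal{M})$, $\theta=e^{\ell}$, $u=\theta v$. Let $Q$ be a field of $\mathfrak g$-symmetric linear maps on tangent spaces with $C^{1}$ coefficients, $I$ the identity, $Y$ a $C^{1}$ vector field and $R\in C^{1}(\mathcal{M})$. Set \[ I_{1}=\mathrm{div}_{\mathfrak{g}}[(Q+I)\nabla_{\mathfrak{g}}u]+\langle Y,\nabla_{\mathfrak{g}}u\rangle_{\mathfrak{g}}+(|\nabla_{\mathfrak{g}}\ell|_{\mathfrak{g}}^{2}+R)u,\quad I_{2}=-\mathrm{div}_{\mathfrak{g}}(Q\nabla_{\mathfrak{g}}u)-\langle2\nabla_{\mathfrak{g}}\ell+Y,\nabla_{\mathfrak{g}}u\rangle_{\mathfrak{g}}-(\Delta_{\mathfrak{g}}\ell+R)u, \] so that $\theta\Delta_{\mathfrak g}v=I_1+I_2$. Then \[ |e^{\ell}\Delta_{\mathfrak{g}}v|^{2}+\mathrm{div}_{\mathfrak{g}}V=|I_{1}|^{2}+|I_{2}|^{2}+B_{1}u^{2}+2B_{2}u+2(B_{3}+F)+B_{4}, \] where \[ \begin{aligned} B_{1}=&(\Delta_{\mathfrak{g}}\ell+R)\mathrm{div}_{\mathfrak{g}}Y+(|\nabla_{\mathfrak{g}}\ell|_{\mathfrak{g}}^{2}+R)\mathrm{div}_{\mathfrak{g}}(2\nabla_{\mathfrak{g}}\ell+Y)+\langle\nabla_{\mathfrak{g}}(\Delta_{\mathfrak{g}}\ell+R),Y\rangle_{\mathfrak{g}}\\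 &+\langle\nabla_{\mathfrak{g}}(|\nabla_{\mathfrak{g}}\ell|_{\mathfrak{g}}^{2}+R),2\nabla_{\mathfrak{g}}\ell+Y\rangle_{\mathfrak{g}}-2(|\nabla_{\mathfrak{g}}\ell|_{\mathfrak{g}}^{2}+R)(\Delta_{\mathfrak{g}}\ell+R),\\ B_{2}=&\langle\nabla_{\mathfrak{g}}(\Delta_{\mathfrak{g}}\ell+R),(Q+I)\nabla_{\mathfrak{g}}u\rangle_{\mathfrak{g}}+\langle\nabla_{\mathfrak{g}}(|\nabla_{\mathfrak{g}}\ell|_{\mathfrak{g}}^{2}+R),Q\nabla_{\mathfrak{g}}u\rangle_{\mathfrak{g}},\\ B_{3}=&\langle(\mathcal{D}_{\mathfrak{g}}(2\nabla_{\mathfrak{g}}\ell+Y),\nabla_{\mathfrak{g}}u)_{\mathfrak{g}},(Q+I)\nabla_{\mathfrak{g}}u\rangle_{\mathfrak{g}}+\langle(\mathcal{D}_{\mathfrak{g}}Y,\nabla_{\mathfrak{g}}u)_{\mathfrak{g}},Q\nabla_{\mathfrak{g}}u\rangle_{\mathfrak{g}}\\ &+(\Delta_{\mathfrak{g}}\ell+R)\langle\nabla_{\mathfrak{g}}u,(Q+I)\nabla_{\mathfrak{g}}u\rangle_{\mathfrak{g}}+(|\nabla_{\mathfrak{g}}\ell|^{2}_{\mathfrak{g}}+R)\langle\nabla_{\mathfrak{g}}u,Q\nabla_{\mathfrak{g}}u\rangle_{\mathfrak{g}}\\ &-\langle Y,\nabla_{\mathfrak{g}}u\rangle_{\mathfrak{g}}\langle2\nabla_{\mathfrak{g}}\ell+Y,\nabla_{\mathfrak{g}}u\rangle_{\mathfrak{g}},\\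 B_{4}=&-2\,\mathrm{div}_{\mathfrak{g}}[(Q+I)\nabla_{\mathfrak{g}}u]\,\mathrm{div}_{\mathfrak{g}}(Q\nabla_{\mathfrak{g}}u),\\ F=&\langle(2\nabla_{\mathfrak{g}}\ell+Y,\mathcal{D}_{\mathfrak{g}}\nabla_{\mathfrak{g}}u)_{\mathfrak{g}},(Q+I)\nabla_{\mathfrak{g}}u\rangle_{\mathfrak{g}}+\langle(Y,\mathcal{D}_{\mathfrak{g}}\nabla_{\mathfrak{g}}u)_{\mathfrak{g}},Q\nabla_{\mathfrak{g}}u\rangle_{\mathfrak{g}},\\ V=&2\big[\langle2\nabla_{\mathfrak{g}}\ell+Y,\nabla_{\mathfrak{g}}u\rangle_{\mathfrak{g}}+(\Delta_{\mathfrak{g}}\ell+R)u\big](Q+I)\nabla_{\mathfrak{g}}u+2\big[\langle Y,\nabla_{\mathfrak{g}}u\rangle_{\mathfrak{g}}+(|\nabla_{\mathfrak{g}}\ell|_{\mathfrak{g}}^{2}+R)u\big]Q\nabla_{\mathfrak{g}}u\\ &+(|\nabla_{\mathfrak{g}}\ell|_{\mathfrak{g}}^{2}+R)u^{2}(2\nabla_{\mathfrak{g}}\ell+Y)+(\Delta_{\mathfrak{g}}\ell+R)u^{2}Y. \end{aligned} \]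
   Context: $\langle\cdot,\cdot\rangle_{\mathfrak g}$, $|\cdot|_{\mathfrak g}$, $\nabla_{\mathfrak g}$, $\mathrm{div}_{\mathfrak g}$, $\Delta_{\mathfrak g}$, $\mathcal D_{\mathfrak g}$ denote the metric inner product and norm, gradient, divergence, Laplace–Beltrami operator and Levi-Civita connection. For $C^1$ vector fields $W,Z$, $(\mathcal{D}_{\mathfrak{g}}W,Z)_{\mathfrak{g}}$ denotes the contraction of $\mathfrak g\otimes\mathcal D_{\mathfrak g}W\otimes Z$, i.e. the vector field characterized by $\langle(\mathcal{D}_{\mathfrak{g}}W,Z)_{\mathfrak{g}},T\rangle_{\mathfrak g}=\langle\mathcal D_{\mathfrak g,T}W,Z\rangle_{\mathfrak g}$ for all tangent $T$, and $(Z,\mathcal D_{\mathfrak g}W)_{\mathfrak g}:=(\mathcal D_{\mathfrak g}W,Z)_{\mathfrak g}$; thus $\nabla_{\mathfrak g}\langle W,Z\rangle_{\mathfrak g}=(\mathcal D_{\mathfrak g}W,Z)_{\mathfrak g}+(W,\mathcal D_{\mathfrak g}Z)_{\mathfrak g}$. *)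

theory Defs
  imports "HOL-Analysis.Analysis"
begin

text \<open>Local (single chart) coordinate rendering of Riemannian geometry.
  Points of the chart domain are x :: real^'n, the metric is the matrix
  field g x = (g_ij(x)), vector fields are given by their coordinate
  components W x $ i = W^i(x), and fields of linear maps by their matrices.\<close>

definition pd :: "(real^'n \<Rightarrow> real) \<Rightarrow> 'n \<Rightarrow> real^'n \<Rightarrow> real" where
  "pd f i x = deriv (\<lambda>t. f (x + t *\<^sub>R axis i 1)) 0"

fun Ck :: "nat \<Rightarrow> (real^'n) set \<Rightarrow> (real^'n \<Rightarrow> real) \<Rightarrow> bool" where
  "Ck 0 U f = continuous_on U f"
| "Ck (Suc k) U f = ((\<forall>x\<in>U. f differentiable (at x)) \<and> (\<forall>i. Ck k U (pd f i)))"

definition riem_metric :: "(real^'n) set \<Rightarrow> (real^'n \<Rightarrow> real^'n^'n) \<Rightarrow> bool" where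
  "riem_metric U g \<longleftrightarrow>
     (\<forall>x\<in>U. transpose (g x) = g x \<and>
        (\<forall>\<xi>::real^'n. \<xi> \<noteq> 0 \<longrightarrow> \<xi> \<bullet> (g x *v \<xi>) > 0))"

definition ginner :: "(real^'n \<Rightarrow> real^'n^'n) \<Rightarrow> real^'n \<Rightarrow> real^'n \<Rightarrow> real^'n \<Rightarrow> real" where
  "ginner g x W Z = (\<Sum>i\<in>UNIV. \<Sum>j\<in>UNIV. g x $ i $ j * W $ i * Z $ j)"

definition gnorm2 :: "(real^'n \<Rightarrow> real^'n^'n) \<Rightarrow> real^'n \<Rightarrow> real^'n \<Rightarrow> real" where
  "gnorm2 g x W = ginner g x W W"

definition ginv :: "(real^'n \<Rightarrow> real^'n^'n) \<Rightarrow> real^'n \<Rightarrow> real^'n^'n" where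
  "ginv g x = matrix_inv (g x)"

definition grad :: "(real^'n \<Rightarrow> real^'n^'n) \<Rightarrow> (real^'n \<Rightarrow> real) \<Rightarrow> real^'n \<Rightarrow> real^'n" where
  "grad g f x = ginv g x *v (\<chi> i. pd f i x)"

definition gdiv :: "(real^'n \<Rightarrow> real^'n^'n) \<Rightarrow> (real^'n \<Rightarrow> real^'n) \<Rightarrow> real^'n \<Rightarrow> real" where
  "gdiv g W x = (1 / sqrt (det (g x))) *
      (\<Sum>i\<in>UNIV. pd (\<lambda>y. sqrt (det (g y)) * W y $ i) i x)"

definition lap :: "(real^'n \<Rightarrow> real^'n^'n) \<Rightarrow> (real^'n \<Rightarrow> real) \<Rightarrow> real^'n \<Rightarrow> real" where
  "lap g f x = gdiv g (grad g f) x"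

definition chr :: "(real^'n \<Rightarrow> real^'n^'n) \<Rightarrow> 'n \<Rightarrow> 'n \<Rightarrow> 'n \<Rightarrow> real^'n \<Rightarrow> real" where
  "chr g k i j x = (1/2) * (\<Sum>l\<in>UNIV. ginv g x $ k $ l *
      (pd (\<lambda>y. g y $ j $ l) i x + pd (\<lambda>y. g y $ i $ l) j x - pd (\<lambda>y. g y $ i $ j) l x))"

definition covD :: "(real^'n \<Rightarrow> real^'n^'n) \<Rightarrow> (real^'n \<Rightarrow> real^'n) \<Rightarrow> real^'n \<Rightarrow> real^'n \<Rightarrow> real^'n" where
  "covD g W x T = (\<chi> k. \<Sum>i\<in>UNIV. T $ i *
      (pd (\<lambda>y. W y $ k) i x + (\<Sum>j\<in>UNIV. chr g k i j x * W x $ j)))"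

text \<open>(D W, Z)_g: the vector field with <(D W,Z)_g, T>_g = <D_T W, Z>_g for all T;
  its covariant components are <D_{e_i} W, Z>_g, then the index is raised.\<close>
definition dcontr :: "(real^'n \<Rightarrow> real^'n^'n) \<Rightarrow> (real^'n \<Rightarrow> real^'n) \<Rightarrow> (real^'n \<Rightarrow> real^'n) \<Rightarrow> real^'n \<Rightarrow> real^'n" where
  "dcontr g W Z x = ginv g x *v (\<chi> i. ginner g x (covD g W x (axis i 1)) (Z x))"

end

theory Submission
  imports Defs
begin

text \<open>In the chart every object is an explicit coordinate expression, and the identity is a
  computation. Conjugation by theta = exp l gives
  theta \<Delta>v = \<Delta>u - 2 <\<nabla>l, \<nabla>u> + (|\<nabla>l|^2 - \<Delta>l) u = I1 + I2,
  so |theta \<Delta>v|^2 = I1^2 + I2^2 + 2 I1 I2. Expanding div V with the product rule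
  div (f Z) = f div Z + <\<nabla>f, Z> and with the compatibility
  \<nabla><W, Z> = (D W, Z) + (W, D Z) of the Levi-Civita connection with the metric turns
  2 I1 I2 + div V into B1 u^2 + 2 B2 u + 2 (B3 + F) + B4; everything else cancels.
  This cross-term computation holds for arbitrary C^1 data in place of |\<nabla>l|^2 + R, \<Delta>l + R,
  2 \<nabla>l + Y, Q + I and Q.\<close>

section \<open>Partial derivatives and C^k regularity\<close>

lemma pd_eqI:
  "((\<lambda>t. f (x + t *\<^sub>R axis i 1)) has_real_derivative D) (at 0) \<Longrightarrow> pd f i x = D"
  by (simp add: pd_def DERIV_imp_deriv)

lemma pd_has_real_derivative:
  fixes f :: "real^'n \<Rightarrow> real"
  assumes "f differentiable (at x)"
  shows "((\<lambda>t. f (x + t *\<^sub>R axis i 1)) has_real_derivative pd f i x) (at 0)"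
proof -
  have "(\<lambda>t::real. x + t *\<^sub>R axis i (1::real)) differentiable (at 0)"
    by (intro derivative_intros)
  then have "(\<lambda>t. f (x + t *\<^sub>R axis i 1)) differentiable (at 0)"
    using differentiable_chain_at[of "\<lambda>t::real. x + t *\<^sub>R axis i (1::real)" 0 f] assms
    by (simp add: o_def)
  then show ?thesis
    unfolding pd_def using DERIV_deriv_iff_real_differentiable by blast
qed

lemma pd_const: "pd (\<lambda>y::real^'n. c) i x = 0"
  by (rule pd_eqI) simp

lemma pd_add:
  fixes f h :: "real^'n \<Rightarrow> real"
  shows "f differentiable (at x) \<Longrightarrow> h differentiable (at x) \<Longrightarrow>
    pd (\<lambda>y. f y + h y) i x = pd f i x + pd h i x"
  by (rule pd_eqI) (rule DERIV_add[OF pd_has_real_derivative pd_has_real_derivative])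

lemma pd_diff:
  fixes f h :: "real^'n \<Rightarrow> real"
  shows "f differentiable (at x) \<Longrightarrow> h differentiable (at x) \<Longrightarrow>
    pd (\<lambda>y. f y - h y) i x = pd f i x - pd h i x"
  by (rule pd_eqI) (rule DERIV_diff[OF pd_has_real_derivative pd_has_real_derivative])

lemma pd_mult:
  fixes f h :: "real^'n \<Rightarrow> real"
  shows "f differentiable (at x) \<Longrightarrow> h differentiable (at x) \<Longrightarrow>
    pd (\<lambda>y. f y * h y) i x = f x * pd h i x + pd f i x * h x"
  by (rule pd_eqI, drule DERIV_mult[OF pd_has_real_derivative pd_has_real_derivative])
     (simp_all add: algebra_simps)

lemma pd_sum:
  fixes f :: "'a \<Rightarrow> real^'n \<Rightarrow> real"
  shows "finite S \<Longrightarrow> (\<And>a. a \<in> S \<Longrightarrow> f a differentiable (at x)) \<Longrightarrow>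
    pd (\<lambda>y. \<Sum>a\<in>S. f a y) i x = (\<Sum>a\<in>S. pd (f a) i x)"
  by (rule pd_eqI, rule DERIV_sum) (auto intro: pd_has_real_derivative)

lemma pd_exp:
  fixes f :: "real^'n \<Rightarrow> real"
  shows "f differentiable (at x) \<Longrightarrow> pd (\<lambda>y. exp (f y)) i x = exp (f x) * pd f i x"
  by (rule pd_eqI) (use DERIV_fun_exp[OF pd_has_real_derivative, of f x i] in simp)

lemma pd_inverse:
  fixes f :: "real^'n \<Rightarrow> real"
  shows "f differentiable (at x) \<Longrightarrow> f x \<noteq> 0 \<Longrightarrow>
    pd (\<lambda>y. inverse (f y)) i x = - (pd f i x * inverse (f x ^ 2))"
  by (rule pd_eqI)
     (use DERIV_inverse_fun[OF pd_has_real_derivative, of f x i] in \<open>simp add: power2_eq_square\<close>)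

lemma pd_sqrt:
  fixes f :: "real^'n \<Rightarrow> real"
  shows "f differentiable (at x) \<Longrightarrow> f x > 0 \<Longrightarrow>
    pd (\<lambda>y. sqrt (f y)) i x = inverse (sqrt (f x)) / 2 * pd f i x"
proof -
  assume "f differentiable (at x)" and "f x > 0"
  then have "((\<lambda>t. sqrt (f (x + t *\<^sub>R axis i 1))) has_real_derivative
      inverse (sqrt (f (x + 0 *\<^sub>R axis i 1))) / 2 * pd f i x) (at 0)"
    by (intro DERIV_chain2[OF DERIV_real_sqrt] pd_has_real_derivative) simp_all
  then show ?thesis by (intro pd_eqI) simp
qed

lemma pd_cong:
  fixes f h :: "real^'n \<Rightarrow> real"
  assumes "open U" "x \<in> U" "\<And>y. y \<in> U \<Longrightarrow> f y = h y"
  shows "pd f i x = pd h i x"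
  unfolding pd_def
proof (rule deriv_cong_ev[OF _ refl])
  have "open ((\<lambda>t::real. x + t *\<^sub>R axis i (1::real)) -` U)"
    by (rule open_vimage[OF assms(1)]) (intro continuous_intros)
  then have "\<forall>\<^sub>F t in nhds 0. x + t *\<^sub>R axis i 1 \<in> U"
    using assms(2) by (auto simp: eventually_nhds)
  then show "\<forall>\<^sub>F t in nhds 0. f (x + t *\<^sub>R axis i 1) = h (x + t *\<^sub>R axis i 1)"
    by eventually_elim (use assms(3) in auto)
qed

lemma differentiable_compose_DERIV:
  "(h has_real_derivative D) (at (f x)) \<Longrightarrow> f differentiable (at x) \<Longrightarrow>
    (\<lambda>y. h (f y)) differentiable (at x)"
proof -
  assume "(h has_real_derivative D) (at (f x))" and "f differentiable (at x)"
  moreover from this(1) have "h differentiable (at (f x))"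
    by (auto simp: field_differentiable_def intro!: field_differentiable_imp_differentiable)
  ultimately show ?thesis
    using differentiable_chain_at[of f x h] by (simp add: o_def)
qed

lemma Ck_Suc_imp_Ck: "Ck (Suc k) U f \<Longrightarrow> Ck k U f"
  by (induction k arbitrary: f)
     (auto intro!: continuous_at_imp_continuous_on differentiable_imp_continuous_within)

lemma Ck_le: "k \<le> m \<Longrightarrow> Ck m U f \<Longrightarrow> Ck k U f"
proof (induction m)
  case (Suc m)
  then show ?case using Ck_Suc_imp_Ck by (metis le_Suc_eq)
qed simp

lemma Ck_imp_differentiable: "Ck k U f \<Longrightarrow> x \<in> U \<Longrightarrow> 0 < k \<Longrightarrow> f differentiable (at x)"
  by (cases k) simp_all

lemma Ck_pd: "k < m \<Longrightarrow> Ck m U f \<Longrightarrow> Ck k U (pd f i)"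
  by (cases m) (auto simp: less_Suc_eq_le intro: Ck_le)

lemma Ck_cong:
  fixes f h :: "real^'n \<Rightarrow> real"
  assumes U: "open U"
  shows "(\<And>y. y \<in> U \<Longrightarrow> f y = h y) \<Longrightarrow> Ck k U f \<Longrightarrow> Ck k U h"
proof (induction k arbitrary: f h)
  case 0
  then show ?case by (simp cong: continuous_on_cong)
next
  case (Suc k)
  have "h differentiable (at x)" if "x \<in> U" for x
  proof -
    from Suc.prems(2) that obtain D where "(f has_derivative D) (at x)"
      by (auto simp: differentiable_def)
    then have "(h has_derivative D) (at x)"
      by (rule has_derivative_transform_within_open[OF _ U that]) (use Suc.prems(1) in auto)
    then show ?thesis by (auto simp: differentiable_def)
  qed
  moreover have "Ck k U (pd h i)" for i
    using Suc.IH[of "pd f i" "pd h i"] Suc.prems pd_cong[OF U, of _ f h i] by auto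
  ultimately show ?case by simp
qed

definition Ck_vec :: "nat \<Rightarrow> (real^'n) set \<Rightarrow> (real^'n \<Rightarrow> real^'m) \<Rightarrow> bool" where
  "Ck_vec k U W \<longleftrightarrow> (\<forall>i. Ck k U (\<lambda>y. W y $ i))"

definition Ck_mat :: "nat \<Rightarrow> (real^'n) set \<Rightarrow> (real^'n \<Rightarrow> real^'m^'l) \<Rightarrow> bool" where
  "Ck_mat k U M \<longleftrightarrow> (\<forall>i j. Ck k U (\<lambda>y. M y $ i $ j))"

context
  fixes U :: "(real^'n) set"
  assumes open_U: "open U"
begin

lemma Ck_const: "Ck k U (\<lambda>y. c)"
proof (induction k arbitrary: c)
  case (Suc k)
  then show ?case by (simp add: pd_const[abs_def] del: Ck.simps(1))
qed simp

lemma Ck_add: "Ck k U f \<Longrightarrow> Ck k U h \<Longrightarrow> Ck k U (\<lambda>y. f y + h y)"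
proof (induction k arbitrary: f h)
  case (Suc k)
  have "Ck k U (pd (\<lambda>y. f y + h y) i)" for i
    by (rule Ck_cong[OF open_U _ Suc.IH[of "pd f i" "pd h i"]]) (use Suc.prems in \<open>auto simp: pd_add\<close>)
  then show ?case using Suc.prems by simp
qed (auto intro: continuous_intros)

lemma Ck_mult: "Ck k U f \<Longrightarrow> Ck k U h \<Longrightarrow> Ck k U (\<lambda>y. f y * h y)"
proof (induction k arbitrary: f h)
  case (Suc k)
  have "Ck k U (\<lambda>y. f y * pd h i y + pd f i y * h y)" for i
    using Suc.prems by (intro Ck_add Suc.IH) (auto intro: Ck_Suc_imp_Ck)
  then have "Ck k U (pd (\<lambda>y. f y * h y) i)" for i
    by (rule Ck_cong[OF open_U, rotated]) (use Suc.prems in \<open>auto simp: pd_mult\<close>)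
  then show ?case using Suc.prems by simp
qed (auto intro: continuous_intros)

lemma Ck_sum: "finite S \<Longrightarrow> (\<And>a. a \<in> S \<Longrightarrow> Ck k U (f a)) \<Longrightarrow> Ck k U (\<lambda>y. \<Sum>a\<in>S. f a y)"
  by (induction S rule: finite_induct) (auto intro: Ck_add Ck_const)

lemma Ck_prod: "finite S \<Longrightarrow> (\<And>a. a \<in> S \<Longrightarrow> Ck k U (f a)) \<Longrightarrow> Ck k U (\<lambda>y. \<Prod>a\<in>S. f a y)"
  by (induction S rule: finite_induct) (auto intro: Ck_mult Ck_const)

lemma Ck_exp: "Ck k U f \<Longrightarrow> Ck k U (\<lambda>y. exp (f y))"
proof (induction k arbitrary: f)
  case (Suc k)
  have "Ck k U (\<lambda>y. exp (f y) * pd f i y)" for i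
    using Suc.prems by (intro Ck_mult Suc.IH) (auto intro: Ck_Suc_imp_Ck)
  then have "Ck k U (pd (\<lambda>y. exp (f y)) i)" for i
    by (rule Ck_cong[OF open_U, rotated]) (use Suc.prems in \<open>auto simp: pd_exp\<close>)
  moreover have "(\<lambda>y. exp (f y)) differentiable (at x)" if "x \<in> U" for x
    using Suc.prems that by (auto intro: differentiable_compose_DERIV DERIV_exp)
  ultimately show ?case using Suc.prems by simp
qed (auto intro: continuous_intros)

lemma Ck_inverse: "Ck k U f \<Longrightarrow> (\<And>y. y \<in> U \<Longrightarrow> f y \<noteq> 0) \<Longrightarrow> Ck k U (\<lambda>y. inverse (f y))"
proof (induction k arbitrary: f)
  case (Suc k)
  have "Ck k U (\<lambda>y. - 1 * pd f i y * (inverse (f y) * inverse (f y)))" for i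
    using Suc.prems by (intro Ck_mult Ck_const Suc.IH) (auto intro: Ck_Suc_imp_Ck)
  then have "Ck k U (pd (\<lambda>y. inverse (f y)) i)" for i
    by (rule Ck_cong[OF open_U, rotated]) (use Suc.prems in \<open>auto simp: pd_inverse power2_eq_square\<close>)
  then show ?case using Suc.prems by simp
qed (auto intro: continuous_intros)

lemma Ck_sqrt: "Ck k U f \<Longrightarrow> (\<And>y. y \<in> U \<Longrightarrow> f y > 0) \<Longrightarrow> Ck k U (\<lambda>y. sqrt (f y))"
proof (induction k arbitrary: f)
  case (Suc k)
  have "Ck k U (\<lambda>y. inverse (sqrt (f y)) * ((1/2) * pd f i y))" for i
    using Suc.prems
    by (intro Ck_mult Ck_inverse Suc.IH Ck_const) (auto intro: Ck_Suc_imp_Ck dest: Suc.prems(2))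
  then have "Ck k U (pd (\<lambda>y. sqrt (f y)) i)" for i
    by (rule Ck_cong[OF open_U, rotated]) (use Suc.prems in \<open>auto simp: pd_sqrt\<close>)
  moreover have "(\<lambda>y. sqrt (f y)) differentiable (at x)" if "x \<in> U" for x
    using Suc.prems that
    by (auto intro: differentiable_compose_DERIV DERIV_real_sqrt)
  ultimately show ?case using Suc.prems by simp
qed (auto intro: continuous_intros)

lemma Ck_det:
  "(\<And>i j. Ck k U (\<lambda>y. M y $ i $ j)) \<Longrightarrow> Ck k U (\<lambda>y. det (M y :: real^'m^'m))"
  unfolding det_def
  by (intro Ck_sum Ck_mult Ck_prod Ck_const) (auto simp: finite_permutations)

lemma Ck_vec_add: "Ck_vec k U W \<Longrightarrow> Ck_vec k U Z \<Longrightarrow> Ck_vec k U (\<lambda>y. W y + Z y)"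
  unfolding Ck_vec_def by (auto intro: Ck_add)

lemma Ck_vec_scaleR: "Ck k U f \<Longrightarrow> Ck_vec k U W \<Longrightarrow> Ck_vec k U (\<lambda>y. f y *\<^sub>R W y)"
  unfolding Ck_vec_def by (auto intro: Ck_mult)

lemma Ck_vec_matrix_vector_mult:
  "Ck_mat k U M \<Longrightarrow> Ck_vec k U W \<Longrightarrow> Ck_vec k U (\<lambda>y. M y *v W y)"
  unfolding Ck_vec_def Ck_mat_def matrix_vector_mult_def
  by (auto intro!: Ck_sum Ck_mult)

lemma Ck_mat_add_mat: "Ck_mat k U Q \<Longrightarrow> Ck_mat k U (\<lambda>y. Q y + mat c)"
  unfolding Ck_mat_def vector_add_component by (intro allI Ck_add Ck_const) blast

end

section \<open>Positive definite matrices\<close>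

lemma det_pos_if_pos_def:
  fixes A :: "real^'n^'n"
  assumes pos: "\<And>\<xi>. \<xi> \<noteq> 0 \<Longrightarrow> \<xi> \<bullet> (A *v \<xi>) > 0"
  shows "det A > 0"
proof (rule ccontr)
  \<comment> \<open>every matrix on the segment from the identity to A is positive definite, hence nonsingular\<close>
  assume "\<not> det A > 0"
  define M where "M t = (1 - t) *\<^sub>R mat 1 + t *\<^sub>R A" for t :: real
  have "continuous_on {0..1} (\<lambda>t. det (M t))"
    unfolding M_def det_def by (intro continuous_intros)
  moreover have "det (M 1) \<le> 0" "0 \<le> det (M 0)"
    using \<open>\<not> det A > 0\<close> by (auto simp: M_def)
  ultimately obtain t where t: "0 \<le> t" "t \<le> 1" "det (M t) = 0"
    using IVT2'[of "\<lambda>t. det (M t)" 1 0 0] by auto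
  then obtain \<xi> where \<xi>: "\<xi> \<noteq> 0" "M t *v \<xi> = 0"
    using invertible_det_nz invertible_left_inverse matrix_left_invertible_ker by metis
  have "0 < (1 - t) * (\<xi> \<bullet> \<xi>) + t * (\<xi> \<bullet> (A *v \<xi>))"
    using t pos[OF \<xi>(1)] \<xi>(1)
    by (cases "t = 0") (auto intro: add_nonneg_pos mult_pos_pos)
  also have "\<dots> = \<xi> \<bullet> (M t *v \<xi>)"
    by (simp add: M_def matrix_vector_mult_add_rdistrib inner_add_right
        scaleR_matrix_vector_assoc[symmetric])
  finally show False
    using \<xi>(2) by simp
qed

lemma matrix_inv_det_nz:
  fixes A :: "real^'n^'n"
  assumes "det A \<noteq> 0"
  shows "A ** matrix_inv A = mat 1" and "matrix_inv A ** A = mat 1"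
proof -
  have "\<exists>A'. A ** A' = mat 1 \<and> A' ** A = mat 1"
    using assms by (simp add: invertible_det_nz[symmetric] invertible_def)
  then have "A ** matrix_inv A = mat 1 \<and> matrix_inv A ** A = mat 1"
    unfolding matrix_inv_def by (rule someI_ex)
  then show "A ** matrix_inv A = mat 1" "matrix_inv A ** A = mat 1" by auto
qed

lemma matrix_inv_entry_cramer:
  fixes A :: "real^'n^'n"
  assumes "det A \<noteq> 0"
  shows "matrix_inv A $ k $ l = det (\<chi> i j. if j = k then axis l 1 $ i else A $ i $ j) / det A"
proof -
  have "A *v (matrix_inv A *v axis l 1) = axis l 1"
    by (simp add: matrix_vector_mul_assoc matrix_inv_det_nz[OF assms])
  then have "matrix_inv A *v axis l 1 = (\<chi> k. det (\<chi> i j. if j = k then axis l 1 $ i else A $ i $ j) / det A)"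
    using cramer[OF assms] by blast
  moreover have "(matrix_inv A *v axis l 1) $ k = matrix_inv A $ k $ l"
    by (simp add: matrix_vector_mult_def axis_def if_distrib cong: if_cong)
  ultimately show ?thesis by simp
qed

section \<open>Riemannian calculus in a chart\<close>

lemma ginner_add_left: "ginner g x (W + Z) T = ginner g x W T + ginner g x Z T"
  by (simp add: ginner_def algebra_simps sum.distrib)

lemma ginner_add_right: "ginner g x T (W + Z) = ginner g x T W + ginner g x T Z"
  by (simp add: ginner_def algebra_simps sum.distrib)

lemma ginner_scaleR_left: "ginner g x (c *\<^sub>R W) T = c * ginner g x W T"
  by (simp add: ginner_def algebra_simps sum_distrib_left)

lemma ginner_scaleR_right: "ginner g x T (c *\<^sub>R W) = c * ginner g x T W"
  by (simp add: ginner_def algebra_simps sum_distrib_left)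

lemma bilinear_sum_mult_left:
  fixes G C :: "'n::finite \<Rightarrow> 'n \<Rightarrow> real" and w z :: "'n \<Rightarrow> real"
  shows "(\<Sum>a\<in>UNIV. \<Sum>b\<in>UNIV. G a b * (\<Sum>j\<in>UNIV. C a j * w j) * z b)
       = (\<Sum>a\<in>UNIV. \<Sum>b\<in>UNIV. (\<Sum>k\<in>UNIV. G k b * C k a) * w a * z b)"
proof -
  have "(\<Sum>a\<in>UNIV. \<Sum>b\<in>UNIV. G a b * (\<Sum>j\<in>UNIV. C a j * w j) * z b)
      = (\<Sum>a\<in>UNIV. \<Sum>j\<in>UNIV. \<Sum>b\<in>UNIV. G a b * C a j * w j * z b)"
    by (subst sum.swap) (simp add: sum_distrib_left sum_distrib_right mult_ac)
  also have "\<dots> = (\<Sum>j\<in>UNIV. \<Sum>a\<in>UNIV. \<Sum>b\<in>UNIV. G a b * C a j * w j * z b)"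
    by (rule sum.swap)
  also have "\<dots> = (\<Sum>j\<in>UNIV. \<Sum>b\<in>UNIV. \<Sum>a\<in>UNIV. G a b * C a j * w j * z b)"
    by (rule sum.cong[OF refl]) (rule sum.swap)
  finally show ?thesis by (simp add: sum_distrib_right)
qed

lemma ginner_matrix_vector_mult_left:
  fixes M :: "real^'n^'n"
  shows "ginner g x (M *v w) z = (\<Sum>a\<in>UNIV. \<Sum>b\<in>UNIV. (\<Sum>k\<in>UNIV. g x $ k $ b * M $ k $ a) * w $ a * z $ b)"
  unfolding ginner_def matrix_vector_mult_def
  by (simp add: bilinear_sum_mult_left[of "\<lambda>a b. g x $ a $ b" "\<lambda>a j. M $ a $ j"])

lemma grad_const: "grad g (\<lambda>y. c) x = 0"
  by (simp add: grad_def pd_const vec_eq_iff matrix_vector_mult_def)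

lemma grad_add:
  "f differentiable (at x) \<Longrightarrow> h differentiable (at x) \<Longrightarrow>
    grad g (\<lambda>y. f y + h y) x = grad g f x + grad g h x"
  by (simp add: grad_def pd_add vec_eq_iff matrix_vector_mult_def sum.distrib algebra_simps)

lemma grad_mult:
  "f differentiable (at x) \<Longrightarrow> h differentiable (at x) \<Longrightarrow>
    grad g (\<lambda>y. f y * h y) x = f x *\<^sub>R grad g h x + h x *\<^sub>R grad g f x"
  by (simp add: grad_def pd_mult vec_eq_iff matrix_vector_mult_def sum.distrib
      sum_distrib_left algebra_simps)

lemma grad_exp:
  "f differentiable (at x) \<Longrightarrow> grad g (\<lambda>y. exp (f y)) x = exp (f x) *\<^sub>R grad g f x"
  by (simp add: grad_def pd_exp vec_eq_iff matrix_vector_mult_def sum_distrib_left mult_ac)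

locale riemannian_chart =
  fixes U :: "(real^'n) set" and g :: "real^'n \<Rightarrow> real^'n^'n"
  assumes open_U: "open U"
    and metric: "riem_metric U g"
    and metric_C3: "\<And>i j. Ck 3 U (\<lambda>x. g x $ i $ j)"
begin

lemma det_metric_pos: "x \<in> U \<Longrightarrow> det (g x) > 0"
  using metric by (auto simp: riem_metric_def intro!: det_pos_if_pos_def)

lemma det_metric_nz: "x \<in> U \<Longrightarrow> det (g x) \<noteq> 0"
  using det_metric_pos[of x] by simp

lemma metric_sym: "x \<in> U \<Longrightarrow> g x $ i $ j = g x $ j $ i"
proof -
  assume "x \<in> U"
  then have "transpose (g x) $ j $ i = g x $ j $ i"
    using metric by (simp add: riem_metric_def)
  then show ?thesis
    by (simp add: transpose_def)
qed

lemma metric_mult_ginv: "x \<in> U \<Longrightarrow> g x ** ginv g x = mat 1"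
  using matrix_inv_det_nz(1)[of "g x"] det_metric_pos[of x] by (simp add: ginv_def)

lemma metric_ginv_delta:
  "x \<in> U \<Longrightarrow> (\<Sum>k\<in>UNIV. g x $ m $ k * ginv g x $ k $ l) = (if m = l then 1 else 0)"
  using metric_mult_ginv[of x] by (simp add: matrix_matrix_mult_def mat_def vec_eq_iff)

lemma Ck_metric: "k \<le> 3 \<Longrightarrow> Ck k U (\<lambda>y. g y $ i $ j)"
  using Ck_le metric_C3 by blast

lemma Ck_det_metric: "k \<le> 3 \<Longrightarrow> Ck k U (\<lambda>y. det (g y))"
  by (rule Ck_det[OF open_U Ck_metric])

lemma Ck_sqrt_det_metric: "k \<le> 3 \<Longrightarrow> Ck k U (\<lambda>y. sqrt (det (g y)))"
  by (rule Ck_sqrt[OF open_U Ck_det_metric]) (auto intro: det_metric_pos)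

lemma Ck_ginv:
  assumes "k \<le> 3"
  shows "Ck k U (\<lambda>y. ginv g y $ i $ j)"
proof -
  have "Ck k U (\<lambda>y. det (\<chi> a b. if b = i then axis j 1 $ a else g y $ a $ b) * inverse (det (g y)))"
  proof (intro Ck_mult[OF open_U] Ck_inverse[OF open_U] Ck_det_metric[OF assms] Ck_det[OF open_U])
    show "Ck k U (\<lambda>y. (\<chi> a b. if b = i then axis j 1 $ a else g y $ a $ b) $ a $ b)" for a b
      by (cases "b = i") (simp_all add: Ck_const[OF open_U] Ck_metric[OF assms])
  qed (simp add: det_metric_nz)
  then show ?thesis
    by (rule Ck_cong[OF open_U, rotated])
       (simp add: ginv_def matrix_inv_entry_cramer det_metric_nz divide_inverse)
qed

lemma Ck_vec_grad:
  assumes "k \<le> 3" "k < m" "Ck m U f"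
  shows "Ck_vec k U (grad g f)"
proof -
  have "Ck k U (\<lambda>y. \<Sum>j\<in>UNIV. ginv g y $ i $ j * pd f j y)" for i
    by (intro Ck_sum[OF open_U] Ck_mult[OF open_U] Ck_ginv[OF assms(1)] Ck_pd[OF assms(2,3)]) simp
  then show ?thesis
    by (simp add: Ck_vec_def grad_def matrix_vector_mult_def)
qed

lemma Ck_ginner: "k \<le> 3 \<Longrightarrow> Ck_vec k U W \<Longrightarrow> Ck_vec k U Z \<Longrightarrow> Ck k U (\<lambda>y. ginner g y (W y) (Z y))"
  unfolding Ck_vec_def ginner_def by (auto intro!: Ck_sum[OF open_U] Ck_mult[OF open_U] Ck_metric)

lemma Ck_gdiv: "k \<le> 2 \<Longrightarrow> Ck_vec (Suc k) U W \<Longrightarrow> Ck k U (gdiv g W)"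
  unfolding gdiv_def Ck_vec_def
  by (intro Ck_mult[OF open_U] Ck_inverse[OF open_U, of k "\<lambda>y. sqrt (det (g y))", unfolded inverse_eq_divide]
      Ck_sum[OF open_U] Ck_pd[of k "Suc k"] Ck_sqrt_det_metric)
     (auto intro: Ck_mult[OF open_U] Ck_sqrt_det_metric dest: det_metric_pos)

lemma ginner_commute: "x \<in> U \<Longrightarrow> ginner g x W Z = ginner g x Z W"
  unfolding ginner_def by (subst sum.swap) (simp add: metric_sym mult_ac)

lemma ginner_eq_inner: "x \<in> U \<Longrightarrow> ginner g x W Z = (g x *v W) \<bullet> Z"
proof -
  assume x: "x \<in> U"
  have "ginner g x W Z = (\<Sum>j\<in>UNIV. \<Sum>i\<in>UNIV. g x $ i $ j * W $ i * Z $ j)"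
    unfolding ginner_def by (rule sum.swap)
  also have "\<dots> = (g x *v W) \<bullet> Z"
    by (simp add: inner_vec_def matrix_vector_mult_def sum_distrib_right metric_sym[OF x])
  finally show ?thesis .
qed

lemma ginner_ginv_left: "x \<in> U \<Longrightarrow> ginner g x (ginv g x *v c) T = c \<bullet> T"
  by (simp add: ginner_eq_inner matrix_vector_mul_assoc metric_mult_ginv)

lemma ginner_grad_left: "x \<in> U \<Longrightarrow> ginner g x (grad g f x) T = (\<Sum>i\<in>UNIV. pd f i x * T $ i)"
  by (simp add: grad_def ginner_ginv_left inner_vec_def)

lemma differentiable_sqrt_det_mult:
  "Ck_vec 1 U W \<Longrightarrow> x \<in> U \<Longrightarrow> (\<lambda>y. sqrt (det (g y)) * W y $ i) differentiable (at x)"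
proof -
  assume "Ck_vec 1 U W" "x \<in> U"
  then have "Ck 1 U (\<lambda>y. sqrt (det (g y)) * W y $ i)"
    unfolding Ck_vec_def by (intro Ck_mult[OF open_U] Ck_sqrt_det_metric) (simp_all only: one_le_numeral)
  then show ?thesis
    using \<open>x \<in> U\<close> by (rule Ck_imp_differentiable) simp
qed

lemma gdiv_add:
  assumes "Ck_vec 1 U W" "Ck_vec 1 U Z" "x \<in> U"
  shows "gdiv g (\<lambda>y. W y + Z y) x = gdiv g W x + gdiv g Z x"
proof -
  have "pd (\<lambda>y. sqrt (det (g y)) * (W y + Z y) $ i) i x
      = pd (\<lambda>y. sqrt (det (g y)) * W y $ i) i x + pd (\<lambda>y. sqrt (det (g y)) * Z y $ i) i x" for i
    using pd_add[OF differentiable_sqrt_det_mult[OF assms(1,3)] differentiable_sqrt_det_mult[OF assms(2,3)]]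
    by (simp add: distrib_left)
  then show ?thesis by (simp add: gdiv_def sum.distrib distrib_left)
qed

lemma gdiv_diff:
  assumes "Ck_vec 1 U W" "Ck_vec 1 U Z" "x \<in> U"
  shows "gdiv g (\<lambda>y. W y - Z y) x = gdiv g W x - gdiv g Z x"
proof -
  have "pd (\<lambda>y. sqrt (det (g y)) * (W y - Z y) $ i) i x
      = pd (\<lambda>y. sqrt (det (g y)) * W y $ i) i x - pd (\<lambda>y. sqrt (det (g y)) * Z y $ i) i x" for i
    using pd_diff[OF differentiable_sqrt_det_mult[OF assms(1,3)] differentiable_sqrt_det_mult[OF assms(2,3)]]
    by (simp add: right_diff_distrib)
  then show ?thesis by (simp add: gdiv_def sum_subtractf right_diff_distrib)
qed

lemma gdiv_cong: "x \<in> U \<Longrightarrow> (\<And>y. y \<in> U \<Longrightarrow> W y = Z y) \<Longrightarrow> gdiv g W x = gdiv g Z x"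
  unfolding gdiv_def by (simp cong: pd_cong[OF open_U])

lemma gdiv_scaleR:
  assumes f: "Ck 1 U f" and W: "Ck_vec 1 U W" and x: "x \<in> U"
  shows "gdiv g (\<lambda>y. f y *\<^sub>R W y) x = f x * gdiv g W x + ginner g x (grad g f x) (W x)"
proof -
  have "pd (\<lambda>y. sqrt (det (g y)) * (f y *\<^sub>R W y) $ i) i x
      = f x * pd (\<lambda>y. sqrt (det (g y)) * W y $ i) i x + pd f i x * (sqrt (det (g x)) * W x $ i)" for i
    using pd_mult[OF Ck_imp_differentiable[OF f x zero_less_one] differentiable_sqrt_det_mult[OF W x]]
    by (simp add: mult.left_commute)
  then have "gdiv g (\<lambda>y. f y *\<^sub>R W y) x = 1 / sqrt (det (g x)) *
      (f x * (\<Sum>i\<in>UNIV. pd (\<lambda>y. sqrt (det (g y)) * W y $ i) i x)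
       + sqrt (det (g x)) * (\<Sum>i\<in>UNIV. pd f i x * W x $ i))"
    by (simp add: gdiv_def sum.distrib sum_distrib_left mult_ac)
  also have "\<dots> = f x * gdiv g W x + (\<Sum>i\<in>UNIV. pd f i x * W x $ i)"
    using det_metric_pos[OF x] by (simp add: gdiv_def field_simps)
  finally show ?thesis by (simp add: ginner_grad_left[OF x])
qed

lemma covD_axis:
  "covD g W x (axis i 1) = (\<chi> k. pd (\<lambda>y. W y $ k) i x) + (\<chi> k j. chr g k i j x) *v W x"
  by (simp add: covD_def axis_def matrix_vector_mult_def vec_eq_iff if_distrib[of "\<lambda>c. c * _"] cong: if_cong)

lemma chr_lowered:
  assumes x: "x \<in> U"
  shows "(\<Sum>k\<in>UNIV. g x $ k $ m * chr g k i j x) = (1/2) *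
     (pd (\<lambda>y. g y $ j $ m) i x + pd (\<lambda>y. g y $ i $ m) j x - pd (\<lambda>y. g y $ i $ j) m x)"
    (is "_ = (1/2) * ?T m")
proof -
  have "(\<Sum>k\<in>UNIV. g x $ k $ m * chr g k i j x)
      = (\<Sum>k\<in>UNIV. \<Sum>l\<in>UNIV. (1/2) * (g x $ m $ k * ginv g x $ k $ l * ?T l))"
    unfolding chr_def
    by (intro sum.cong refl) (simp add: metric_sym[OF x, of _ m] sum_distrib_left mult_ac)
  also have "\<dots> = (\<Sum>l\<in>UNIV. \<Sum>k\<in>UNIV. (1/2) * (g x $ m $ k * ginv g x $ k $ l * ?T l))"
    by (rule sum.swap)
  also have "\<dots> = (1/2) * (\<Sum>l\<in>UNIV. (\<Sum>k\<in>UNIV. g x $ m $ k * ginv g x $ k $ l) * ?T l)"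
    by (simp add: sum_distrib_left sum_distrib_right)
  also have "\<dots> = (1/2) * ?T m"
    by (simp add: metric_ginv_delta[OF x] if_distrib[of "\<lambda>c. c * _"] cong: if_cong)
  finally show ?thesis .
qed

lemma chr_lowered_add:
  assumes x: "x \<in> U"
  shows "(\<Sum>k\<in>UNIV. g x $ k $ b * chr g k i a x) + (\<Sum>k\<in>UNIV. g x $ k $ a * chr g k i b x)
    = pd (\<lambda>y. g y $ a $ b) i x"
proof -
  have "pd (\<lambda>y. g y $ b $ a) i x = pd (\<lambda>y. g y $ a $ b) i x"
    by (rule pd_cong[OF open_U x]) (simp add: metric_sym)
  then show ?thesis
    unfolding chr_lowered[OF x] by (simp add: field_simps)
qed

lemma pd_ginner:
  assumes W: "Ck_vec 1 U W" and Z: "Ck_vec 1 U Z" and x: "x \<in> U"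
  shows "pd (\<lambda>y. ginner g y (W y) (Z y)) i x
    = ginner g x (covD g W x (axis i 1)) (Z x) + ginner g x (W x) (covD g Z x (axis i 1))"
proof -
  define \<Gamma> where "\<Gamma> = (\<chi> k j. chr g k i j x)"
  have Wd: "(\<lambda>y. W y $ a) differentiable (at x)" for a
    using W x unfolding Ck_vec_def by (blast intro: Ck_imp_differentiable)
  have Zd: "(\<lambda>y. Z y $ a) differentiable (at x)" for a
    using Z x unfolding Ck_vec_def by (blast intro: Ck_imp_differentiable)
  have gd: "(\<lambda>y. g y $ a $ b) differentiable (at x)" for a b
    by (rule Ck_imp_differentiable[OF Ck_metric[of 1] x]) simp_all
  have "pd (\<lambda>y. ginner g y (W y) (Z y)) i x
      = (\<Sum>a\<in>UNIV. \<Sum>b\<in>UNIV. pd (\<lambda>y. g y $ a $ b * W y $ a * Z y $ b) i x)"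
    unfolding ginner_def by (simp add: pd_sum differentiable_sum differentiable_mult Wd Zd gd)
  also have "\<dots> = (\<Sum>a\<in>UNIV. \<Sum>b\<in>UNIV. pd (\<lambda>y. g y $ a $ b) i x * W x $ a * Z x $ b)
      + ginner g x (\<chi> k. pd (\<lambda>y. W y $ k) i x) (Z x) + ginner g x (W x) (\<chi> k. pd (\<lambda>y. Z y $ k) i x)"
    by (simp add: pd_mult differentiable_mult Wd Zd gd ginner_def sum.distrib algebra_simps)
  also have "(\<Sum>a\<in>UNIV. \<Sum>b\<in>UNIV. pd (\<lambda>y. g y $ a $ b) i x * W x $ a * Z x $ b)
      = ginner g x (\<Gamma> *v W x) (Z x) + ginner g x (W x) (\<Gamma> *v Z x)"
  proof -
    have "ginner g x (W x) (\<Gamma> *v Z x)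
        = (\<Sum>a\<in>UNIV. \<Sum>b\<in>UNIV. (\<Sum>k\<in>UNIV. g x $ k $ a * \<Gamma> $ k $ b) * W x $ a * Z x $ b)"
      unfolding ginner_commute[OF x, of "W x"] ginner_matrix_vector_mult_left
      by (subst sum.swap) (simp add: mult_ac)
    then show ?thesis
      by (simp add: ginner_matrix_vector_mult_left \<Gamma>_def chr_lowered_add[OF x, symmetric]
          sum.distrib algebra_simps)
  qed
  finally show ?thesis
    by (simp add: covD_axis \<Gamma>_def ginner_add_left ginner_add_right)
qed

lemma grad_ginner:
  assumes W: "Ck_vec 1 U W" and Z: "Ck_vec 1 U Z" and x: "x \<in> U"
  shows "grad g (\<lambda>y. ginner g y (W y) (Z y)) x = dcontr g W Z x + dcontr g Z W x"
proof -
  have "(\<chi> i. pd (\<lambda>y. ginner g y (W y) (Z y)) i x)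
      = (\<chi> i. ginner g x (covD g W x (axis i 1)) (Z x)) + (\<chi> i. ginner g x (covD g Z x (axis i 1)) (W x))"
    by (simp add: vec_eq_iff pd_ginner[OF W Z x] ginner_commute[OF x, of "W x"])
  then show ?thesis
    by (simp add: grad_def dcontr_def matrix_vector_right_distrib)
qed

lemma lap_exp_mult:
  assumes l: "Ck 2 U ell" and v: "Ck 2 U v" and x: "x \<in> U"
  defines "u \<equiv> \<lambda>y. exp (ell y) * v y"
  shows "lap g u x = exp (ell x) * lap g v x + 2 * ginner g x (grad g ell x) (grad g u x)
    + (lap g ell x - gnorm2 g x (grad g ell x)) * u x"
proof -
  have theta: "Ck 2 U (\<lambda>y. exp (ell y))"
    by (rule Ck_exp[OF open_U l])
  have grad_u: "grad g u y = exp (ell y) *\<^sub>R grad g v y + u y *\<^sub>R grad g ell y" if "y \<in> U" for y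
    using Ck_imp_differentiable[OF l that] Ck_imp_differentiable[OF v that]
      Ck_imp_differentiable[OF theta that]
    by (simp add: u_def grad_mult grad_exp)
  have grad_v: "Ck_vec 1 U (grad g v)" and grad_l: "Ck_vec 1 U (grad g ell)"
    by (simp_all add: Ck_vec_grad[OF _ _ v] Ck_vec_grad[OF _ _ l])
  have theta1: "Ck 1 U (\<lambda>y. exp (ell y))" and u1: "Ck 1 U u"
    unfolding u_def by (rule Ck_le[OF _ theta], simp) (rule Ck_le[OF _ Ck_mult[OF open_U theta v]], simp)
  have "lap g u x = gdiv g (\<lambda>y. exp (ell y) *\<^sub>R grad g v y + u y *\<^sub>R grad g ell y) x"
    unfolding lap_def by (rule gdiv_cong[OF x grad_u])
  also have "\<dots> = exp (ell x) * lap g v x + ginner g x (grad g (\<lambda>y. exp (ell y)) x) (grad g v x)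
      + (u x * lap g ell x + ginner g x (grad g u x) (grad g ell x))"
    unfolding lap_def
    by (simp only: gdiv_add[OF Ck_vec_scaleR[OF open_U theta1 grad_v] Ck_vec_scaleR[OF open_U u1 grad_l] x]
        gdiv_scaleR[OF theta1 grad_v x] gdiv_scaleR[OF u1 grad_l x])
  also have "ginner g x (grad g (\<lambda>y. exp (ell y)) x) (grad g v x)
      = ginner g x (grad g ell x) (grad g u x) - u x * gnorm2 g x (grad g ell x)"
    by (simp add: grad_exp Ck_imp_differentiable[OF l x] grad_u[OF x] gnorm2_def
        ginner_scaleR_left ginner_add_right ginner_scaleR_right)
  finally show ?thesis
    by (simp add: ginner_commute[OF x, of "grad g u x"] algebra_simps)
qed

lemma conjugated_laplacian_decomposition:
  assumes l: "Ck 2 U ell" and v: "Ck 2 U v" and Q: "Ck_mat 1 U Q" and x: "x \<in> U"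
  defines "u \<equiv> \<lambda>y. exp (ell y) * v y"
  shows "exp (ell x) * lap g v x
    = (gdiv g (\<lambda>y. (Q y + mat 1) *v grad g u y) x + ginner g x (Y x) (grad g u x)
        + (gnorm2 g x (grad g ell x) + R x) * u x)
      + (- gdiv g (\<lambda>y. Q y *v grad g u y) x - ginner g x (2 *\<^sub>R grad g ell x + Y x) (grad g u x)
        - (lap g ell x + R x) * u x)"
proof -
  have grad_u: "Ck_vec 1 U (grad g u)"
    unfolding u_def by (rule Ck_vec_grad[OF _ _ Ck_mult[OF open_U Ck_exp[OF open_U l] v]]) simp_all
  have "gdiv g (\<lambda>y. (Q y + mat 1) *v grad g u y) x - gdiv g (\<lambda>y. Q y *v grad g u y) x
      = gdiv g (\<lambda>y. (Q y + mat 1) *v grad g u y - Q y *v grad g u y) x"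
    by (rule gdiv_diff[symmetric, OF Ck_vec_matrix_vector_mult[OF open_U Ck_mat_add_mat[OF open_U Q] grad_u]
        Ck_vec_matrix_vector_mult[OF open_U Q grad_u] x])
  also have "\<dots> = lap g u x"
    by (simp add: lap_def matrix_vector_mult_add_rdistrib)
  finally show ?thesis
    unfolding u_def lap_exp_mult[OF l v x]
    by (simp add: ginner_add_left ginner_scaleR_left gnorm2_def algebra_simps)
qed

lemma Ck_flux_coeff:
  assumes u: "Ck 2 U u" and L: "Ck 1 U L" and W: "Ck_vec 1 U W"
  shows "Ck 1 U (\<lambda>y. 2 * (ginner g y (W y) (grad g u y) + L y * u y))"
proof -
  have "Ck 1 U (\<lambda>y. ginner g y (W y) (grad g u y))"
    by (rule Ck_ginner[OF _ W Ck_vec_grad[OF _ _ u]]) simp_all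
  moreover have "Ck 1 U (\<lambda>y. L y * u y)"
    by (rule Ck_mult[OF open_U L Ck_le[OF _ u]]) simp
  ultimately show ?thesis
    by (rule Ck_mult[OF open_U Ck_const[OF open_U] Ck_add[OF open_U]])
qed

lemma grad_flux_coeff:
  assumes u: "Ck 2 U u" and L: "Ck 1 U L" and W: "Ck_vec 1 U W" and x: "x \<in> U"
  shows "grad g (\<lambda>y. 2 * (ginner g y (W y) (grad g u y) + L y * u y)) x
    = 2 *\<^sub>R (dcontr g W (grad g u) x + dcontr g (grad g u) W x + L x *\<^sub>R grad g u x + u x *\<^sub>R grad g L x)"
proof -
  have grad_u: "Ck_vec 1 U (grad g u)"
    by (rule Ck_vec_grad[OF _ _ u]) simp_all
  have "(\<lambda>y. ginner g y (W y) (grad g u y)) differentiable (at x)"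
    by (rule Ck_imp_differentiable[OF Ck_ginner[OF _ W grad_u] x]) simp_all
  moreover have "u differentiable (at x)" "L differentiable (at x)"
    by (rule Ck_imp_differentiable[OF u x], simp) (rule Ck_imp_differentiable[OF L x], simp)
  ultimately show ?thesis
    by (simp add: grad_mult grad_add grad_const grad_ginner[OF W grad_u x] differentiable_add
        differentiable_mult scaleR_add_right)
qed

lemma ginner_grad_mult_square:
  assumes u: "Ck 1 U u" and L: "Ck 1 U L" and x: "x \<in> U"
  shows "ginner g x (grad g (\<lambda>y. L y * (u y)\<^sup>2) x) T
    = 2 * L x * u x * ginner g x (grad g u x) T + (u x)\<^sup>2 * ginner g x (grad g L x) T"
proof -
  have ud: "u differentiable (at x)" and Ld: "L differentiable (at x)"
    by (rule Ck_imp_differentiable[OF u x], simp) (rule Ck_imp_differentiable[OF L x], simp)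
  have "(\<lambda>y. L y * (u y)\<^sup>2) = (\<lambda>y. L y * (u y * u y))"
    by (simp add: power2_eq_square)
  then show ?thesis
    by (simp only: grad_mult[OF Ld differentiable_mult[OF ud ud]] grad_mult[OF ud ud]
        ginner_add_left ginner_scaleR_left) (simp add: power2_eq_square algebra_simps)
qed

lemma cross_term_identity:
  assumes u: "Ck 2 U u" and L1: "Ck 1 U L1" and L2: "Ck 1 U L2"
    and W: "Ck_vec 1 U W" and Y: "Ck_vec 1 U Y" and A: "Ck_mat 1 U A" and Q: "Ck_mat 1 U Q"
    and x: "x \<in> U"
  shows "2 * (gdiv g (\<lambda>y. A y *v grad g u y) x + ginner g x (Y x) (grad g u x) + L1 x * u x)
        * (- gdiv g (\<lambda>y. Q y *v grad g u y) x - ginner g x (W x) (grad g u x) - L2 x * u x)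
      + gdiv g (\<lambda>y. (2 * (ginner g y (W y) (grad g u y) + L2 y * u y)) *\<^sub>R (A y *v grad g u y)
          + (2 * (ginner g y (Y y) (grad g u y) + L1 y * u y)) *\<^sub>R (Q y *v grad g u y)
          + (L1 y * (u y)\<^sup>2) *\<^sub>R W y + (L2 y * (u y)\<^sup>2) *\<^sub>R Y y) x
    = (L2 x * gdiv g Y x + L1 x * gdiv g W x + ginner g x (grad g L2 x) (Y x)
        + ginner g x (grad g L1 x) (W x) - 2 * L1 x * L2 x) * (u x)\<^sup>2
      + 2 * (ginner g x (grad g L2 x) (A x *v grad g u x) + ginner g x (grad g L1 x) (Q x *v grad g u x))
        * u x
      + 2 * ((ginner g x (dcontr g W (grad g u) x) (A x *v grad g u x)
          + ginner g x (dcontr g Y (grad g u) x) (Q x *v grad g u x)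
          + L2 x * ginner g x (grad g u x) (A x *v grad g u x)
          + L1 x * ginner g x (grad g u x) (Q x *v grad g u x)
          - ginner g x (Y x) (grad g u x) * ginner g x (W x) (grad g u x))
        + (ginner g x (dcontr g (grad g u) W x) (A x *v grad g u x)
          + ginner g x (dcontr g (grad g u) Y x) (Q x *v grad g u x)))
      + - 2 * gdiv g (\<lambda>y. A y *v grad g u y) x * gdiv g (\<lambda>y. Q y *v grad g u y) x"
proof -
  have grad_u: "Ck_vec 1 U (grad g u)"
    by (rule Ck_vec_grad[OF _ _ u]) simp_all
  have u1: "Ck 1 U u"
    by (rule Ck_le[OF _ u]) simp
  have AP: "Ck_vec 1 U (\<lambda>y. A y *v grad g u y)" and QP: "Ck_vec 1 U (\<lambda>y. Q y *v grad g u y)"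
    by (rule Ck_vec_matrix_vector_mult[OF open_U A grad_u], rule Ck_vec_matrix_vector_mult[OF open_U Q grad_u])
  have f1: "Ck 1 U (\<lambda>y. 2 * (ginner g y (W y) (grad g u y) + L2 y * u y))"
    and f2: "Ck 1 U (\<lambda>y. 2 * (ginner g y (Y y) (grad g u y) + L1 y * u y))"
    by (rule Ck_flux_coeff[OF u L2 W], rule Ck_flux_coeff[OF u L1 Y])
  have s1: "Ck 1 U (\<lambda>y. L1 y * (u y)\<^sup>2)" and s2: "Ck 1 U (\<lambda>y. L2 y * (u y)\<^sup>2)"
    unfolding power2_eq_square
    by (rule Ck_mult[OF open_U L1 Ck_mult[OF open_U u1 u1]], rule Ck_mult[OF open_U L2 Ck_mult[OF open_U u1 u1]])
  note V1 = Ck_vec_scaleR[OF open_U f1 AP] and V2 = Ck_vec_scaleR[OF open_U f2 QP]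
    and V3 = Ck_vec_scaleR[OF open_U s1 W] and V4 = Ck_vec_scaleR[OF open_U s2 Y]
  show ?thesis
    unfolding gdiv_add[OF Ck_vec_add[OF open_U Ck_vec_add[OF open_U V1 V2] V3] V4 x]
      gdiv_add[OF Ck_vec_add[OF open_U V1 V2] V3 x] gdiv_add[OF V1 V2 x]
      gdiv_scaleR[OF f1 AP x] gdiv_scaleR[OF f2 QP x] gdiv_scaleR[OF s1 W x] gdiv_scaleR[OF s2 Y x]
      grad_flux_coeff[OF u L2 W x] grad_flux_coeff[OF u L1 Y x]
      ginner_grad_mult_square[OF u1 L1 x] ginner_grad_mult_square[OF u1 L2 x]
    by (simp add: ginner_add_left ginner_scaleR_left ginner_commute[OF x, of "grad g u x" "W x"]
        ginner_commute[OF x, of "grad g u x" "Y x"] algebra_simps power2_eq_square)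
qed

end

lemma LetI: "(\<And>x. x = t \<Longrightarrow> P x) \<Longrightarrow> Let t P"
  by (simp add: Let_def)

theorem theorem2p1:
  fixes U :: "(real^'n) set"
    and g :: "real^'n \<Rightarrow> real^'n^'n"
    and v ell R :: "real^'n \<Rightarrow> real"
    and Q :: "real^'n \<Rightarrow> real^'n^'n"
    and Y :: "real^'n \<Rightarrow> real^'n"
  assumes U: "open U"
    and g_metric: "riem_metric U g"
    and g_C3: "\<And>i j. Ck 3 U (\<lambda>x. g x $ i $ j)"
    and v_C2: "Ck 2 U v"
    and l_C3: "Ck 3 U ell"
    and Q_C1: "\<And>i j. Ck 1 U (\<lambda>x. Q x $ i $ j)"
    and Q_sym: "\<And>x W Z. x \<in> U \<Longrightarrow> ginner g x (Q x *v W) Z = ginner g x W (Q x *v Z)"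
    and Y_C1: "\<And>i. Ck 1 U (\<lambda>x. Y x $ i)"
    and R_C1: "Ck 1 U R"
  shows "let
      theta = \<lambda>x. exp (ell x);
      u = \<lambda>x. theta x * v x;
      L1 = \<lambda>x. gnorm2 g x (grad g ell x) + R x;
      L2 = \<lambda>x. lap g ell x + R x;
      W = \<lambda>x. 2 *\<^sub>R grad g ell x + Y x;
      I1 = \<lambda>x. gdiv g (\<lambda>y. (Q y + mat 1) *v grad g u y) x
                  + ginner g x (Y x) (grad g u x) + L1 x * u x;
      I2 = \<lambda>x. - gdiv g (\<lambda>y. Q y *v grad g u y) x
                  - ginner g x (W x) (grad g u x) - L2 x * u x;
      B1 = \<lambda>x. L2 x * gdiv g Y x + L1 x * gdiv g W x
                  + ginner g x (grad g L2 x) (Y x) + ginner g x (grad g L1 x) (W x)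
                  - 2 * L1 x * L2 x;
      B2 = \<lambda>x. ginner g x (grad g L2 x) ((Q x + mat 1) *v grad g u x)
                  + ginner g x (grad g L1 x) (Q x *v grad g u x);
      B3 = \<lambda>x. ginner g x (dcontr g W (grad g u) x) ((Q x + mat 1) *v grad g u x)
                  + ginner g x (dcontr g Y (grad g u) x) (Q x *v grad g u x)
                  + L2 x * ginner g x (grad g u x) ((Q x + mat 1) *v grad g u x)
                  + L1 x * ginner g x (grad g u x) (Q x *v grad g u x)
                  - ginner g x (Y x) (grad g u x) * ginner g x (W x) (grad g u x);
      B4 = \<lambda>x. - 2 * gdiv g (\<lambda>y. (Q y + mat 1) *v grad g u y) x
                      * gdiv g (\<lambda>y. Q y *v grad g u y) x;
      F = \<lambda>x. ginner g x (dcontr g (grad g u) W x) ((Q x + mat 1) *v grad g u x)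
                 + ginner g x (dcontr g (grad g u) Y x) (Q x *v grad g u x);
      V = \<lambda>x. (2 * (ginner g x (W x) (grad g u x) + L2 x * u x)) *\<^sub>R ((Q x + mat 1) *v grad g u x)
                 + (2 * (ginner g x (Y x) (grad g u x) + L1 x * u x)) *\<^sub>R (Q x *v grad g u x)
                 + (L1 x * (u x)\<^sup>2) *\<^sub>R W x
                 + (L2 x * (u x)\<^sup>2) *\<^sub>R Y x
    in \<forall>x\<in>U. (exp (ell x) * lap g v x)\<^sup>2 + gdiv g V x
            = (I1 x)\<^sup>2 + (I2 x)\<^sup>2 + B1 x * (u x)\<^sup>2 + 2 * B2 x * u x
              + 2 * (B3 x + F x) + B4 x"
proof -
  interpret riemannian_chart U g
    by (rule riemannian_chart.intro[OF U g_metric g_C3])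
  have ell_C2: "Ck 2 U ell"
    by (rule Ck_le[OF _ l_C3]) simp
  have u_C2: "Ck 2 U (\<lambda>y. exp (ell y) * v y)"
    by (rule Ck_mult[OF U Ck_exp[OF U ell_C2] v_C2])
  have grad_ell_C1: "Ck_vec 1 U (grad g ell)"
    by (rule Ck_vec_grad[OF _ _ l_C3]) simp_all
  have L1_C1: "Ck 1 U (\<lambda>y. gnorm2 g y (grad g ell y) + R y)"
    unfolding gnorm2_def by (rule Ck_add[OF U Ck_ginner[OF _ grad_ell_C1 grad_ell_C1] R_C1]) simp
  have L2_C1: "Ck 1 U (\<lambda>y. lap g ell y + R y)"
    unfolding lap_def by (rule Ck_add[OF U Ck_gdiv[OF _ Ck_vec_grad[OF _ _ l_C3]] R_C1]) simp_all
  have Y_vec_C1: "Ck_vec 1 U Y"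
    unfolding Ck_vec_def using Y_C1 by blast
  have W_C1: "Ck_vec 1 U (\<lambda>y. 2 *\<^sub>R grad g ell y + Y y)"
    by (rule Ck_vec_add[OF U Ck_vec_scaleR[OF U Ck_const[OF U] grad_ell_C1] Y_vec_C1])
  have Q_mat_C1: "Ck_mat 1 U Q"
    unfolding Ck_mat_def using Q_C1 by blast
  show ?thesis
  proof (intro LetI ballI, goal_cases)
    case (1 theta u L1 L2 W I1 I2 B1 B2 B3 B4 F V x)
    then have I: "exp (ell x) * lap g v x = I1 x + I2 x"
      by (simp only: conjugated_laplacian_decomposition[OF ell_C2 v_C2 Q_mat_C1 \<open>x \<in> U\<close>])
    from 1 have "2 * I1 x * I2 x + gdiv g V x
        = B1 x * (u x)\<^sup>2 + 2 * B2 x * u x + 2 * (B3 x + F x) + B4 x"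
      by (simp only: cross_term_identity[OF u_C2 L1_C1 L2_C1 W_C1 Y_vec_C1
          Ck_mat_add_mat[OF U Q_mat_C1] Q_mat_C1 \<open>x \<in> U\<close>])
    then show ?case
      unfolding I power2_sum by linarith
  qed
qed

end
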